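(* For every integer $k\geq 1$ there exists a finite tree $\tau$ such that $\mathrm{box}(\tau^k)>k$.
   Context: For a tree $\tau$, $\tau^k$ is the graph on $V(\tau)$ in which distinct $u,v$ are adjacent iff their distance in $\tau$ is at most $k$. The boxicity $\mathrm{box}(G)$ is the minimum integer $t$ such that $G$ is the intersection graph of axis-parallel $t$-dimensional boxes (Cartesian products of $t$ closed real intervals), i.e. there is a map $f$ from $V(G)$ to such boxes with $(u,v)\in E(G)\iff f(u)\cap f(v)\neq\emptyset$ for distinct $u,v$. *)

theory Defs
  imports Main "HOL-Library.FuncSet" Complex_Main
begin

definition simple_graph :: "'a set \<Rightarrow> ('a \<Rightarrow> 'a \<Rightarrow> bool) \<Rightarrow> bool" where
  "simple_graph V E \<longleftrightarrow>
     (\<forall>u v. E u v \<longrightarrow> u \<in> V \<and> v \<in> V) \<and>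
     (\<forall>u v. E u v \<longrightarrow> E v u) \<and> (\<forall>u. \<not> E u u)"

definition is_walk :: "'a set \<Rightarrow> ('a \<Rightarrow> 'a \<Rightarrow> bool) \<Rightarrow> 'a list \<Rightarrow> bool" where
  "is_walk V E xs \<longleftrightarrow> xs \<noteq> [] \<and> set xs \<subseteq> V \<and>
     (\<forall>i. Suc i < length xs \<longrightarrow> E (xs ! i) (xs ! Suc i))"

definition connected_graph :: "'a set \<Rightarrow> ('a \<Rightarrow> 'a \<Rightarrow> bool) \<Rightarrow> bool" where
  "connected_graph V E \<longleftrightarrow>
     (\<forall>u\<in>V. \<forall>v\<in>V. \<exists>xs. is_walk V E xs \<and> hd xs = u \<and> last xs = v)"

definition is_cycle :: "'a set \<Rightarrow> ('a \<Rightarrow> 'a \<Rightarrow> bool) \<Rightarrow> 'a list \<Rightarrow> bool" where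
  "is_cycle V E xs \<longleftrightarrow> is_walk V E xs \<and> distinct xs \<and> length xs \<ge> 3 \<and>
     E (last xs) (hd xs)"

definition finite_tree :: "'a set \<Rightarrow> ('a \<Rightarrow> 'a \<Rightarrow> bool) \<Rightarrow> bool" where
  "finite_tree V E \<longleftrightarrow> simple_graph V E \<and> finite V \<and> V \<noteq> {} \<and>
     connected_graph V E \<and> (\<nexists>xs. is_cycle V E xs)"

definition graph_dist :: "'a set \<Rightarrow> ('a \<Rightarrow> 'a \<Rightarrow> bool) \<Rightarrow> 'a \<Rightarrow> 'a \<Rightarrow> nat" where
  "graph_dist V E u v = (LEAST n. \<exists>xs. is_walk V E xs \<and> hd xs = u \<and> last xs = v
                                        \<and> length xs = Suc n)"

definition graph_power :: "'a set \<Rightarrow> ('a \<Rightarrow> 'a \<Rightarrow> bool) \<Rightarrow> nat \<Rightarrow> 'a \<Rightarrow> 'a \<Rightarrow> bool" where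
  "graph_power V E k u v \<longleftrightarrow> u \<in> V \<and> v \<in> V \<and> u \<noteq> v \<and> graph_dist V E u v \<le> k"

definition box_set :: "nat \<Rightarrow> (nat \<Rightarrow> real) \<Rightarrow> (nat \<Rightarrow> real) \<Rightarrow> (nat \<Rightarrow> real) set" where
  "box_set t a b = (\<Pi>\<^sub>E i\<in>{..<t}. {a i .. b i})"

definition box_representable :: "'a set \<Rightarrow> ('a \<Rightarrow> 'a \<Rightarrow> bool) \<Rightarrow> nat \<Rightarrow> bool" where
  "box_representable V E t \<longleftrightarrow>
     (\<exists>a b :: 'a \<Rightarrow> nat \<Rightarrow> real.
        (\<forall>v\<in>V. \<forall>i<t. a v i \<le> b v i) \<and>
        (\<forall>u\<in>V. \<forall>v\<in>V. u \<noteq> v \<longrightarrow>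
            (E u v \<longleftrightarrow> box_set t (a u) (b u) \<inter> box_set t (a v) (b v) \<noteq> {})))"

definition boxicity :: "'a set \<Rightarrow> ('a \<Rightarrow> 'a \<Rightarrow> bool) \<Rightarrow> nat" where
  "boxicity V E = (LEAST t. box_representable V E t)"

end

theory Submission
  imports Defs "HOL-Library.Nat_Bijection"
begin

text \<open>
  The tree is a spider: \<open>m\<close> paths of length \<open>k + 1\<close> glued at a centre. On leg \<open>i\<close>
  let \<open>x i e\<close> be the vertex at depth \<open>k + 1 - e\<close> and \<open>c i e\<close> the vertex at depth \<open>e\<close>
  (\<open>e \<le> k\<close>). In the \<open>k\<close>-th power, \<open>c i e'\<close> is equal or adjacent to every
  \<open>x i e\<close> if \<open>e' \<ge> 1\<close>, and \<open>c j e\<close> is adjacent to every \<open>x i e'\<close> with \<open>e < e'\<close>,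
  while \<open>x i e\<close> and \<open>c j e\<close> are at distance \<open>k + 1\<close> for \<open>i \<noteq> j\<close>. In a representation by \<open>t\<close>-dimensional boxes each
  such non-adjacency is witnessed by one of the \<open>2 t\<close> pairs \<open>p\<close> of a coordinate and
  a side. Let \<open>\<theta>\<^sub>i p\<close> be the least \<open>e\<close> at which \<open>x i e\<close> is separated at \<open>p\<close> from some
  \<open>c j e\<close>. The adjacencies turn a separation of \<open>x i e\<close> from \<open>c j e\<close> together with
  one of \<open>x i' e'\<close> from \<open>c i e'\<close> at the same \<open>p\<close>, with \<open>e < e'\<close>, into a cyclic chain
  of strict inequalities; so the latter separation forces \<open>\<theta>\<^sub>i p \<ge> e'\<close>. If
  \<open>m > (k + 2) ^ (2 t)\<close>, two legs \<open>i \<noteq> j\<close> have \<open>\<theta>\<^sub>i = \<theta>\<^sub>j\<close>; then \<open>\<theta>\<^sub>i\<close> takes the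
  value \<open>0\<close>, and each \<open>e \<in> {1..k}\<close> at two different pairs (those separating
  \<open>x i e\<close> from \<open>c j e\<close> and \<open>x j e\<close> from \<open>c i e\<close>), whence \<open>2 k + 1 \<le> 2 t\<close>.
\<close>

section \<open>Walks and distances\<close>

lemma is_walk_singleton [simp]: "is_walk V E [x] \<longleftrightarrow> x \<in> V"
  by (simp add: is_walk_def)

lemma is_walk_Cons_Cons:
  "is_walk V E (x # y # zs) \<longleftrightarrow> x \<in> V \<and> E x y \<and> is_walk V E (y # zs)"
  unfolding is_walk_def by (auto simp: less_Suc_eq_0_disj)

lemma is_walk_append:
  assumes "is_walk V E xs" "is_walk V E ys" "last xs = hd ys"
  shows "is_walk V E (xs @ tl ys)"
  using assms
proof (induction xs rule: induct_list012)
  case 1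
  then show ?case by (simp add: is_walk_def)
next
  case (2 x)
  then show ?case by (cases ys) (auto simp: is_walk_def)
next
  case (3 x y zs)
  then show ?case by (simp add: is_walk_Cons_Cons)
qed

lemma is_walk_rev:
  assumes sym: "\<And>u v. E u v \<Longrightarrow> E v u" and "is_walk V E xs"
  shows "is_walk V E (rev xs)"
  using assms(2)
proof (induction xs rule: induct_list012)
  case (3 x y zs)
  then have "x \<in> V" "E y x" "is_walk V E (y # zs)"
    by (simp_all add: is_walk_Cons_Cons sym)
  moreover from this(3) have "is_walk V E (rev zs @ [y])" "y \<in> V"
    using "3.IH"(2) by (simp_all add: is_walk_def)
  ultimately have "is_walk V E ((rev zs @ [y]) @ tl [y, x])"
    by (intro is_walk_append) (simp_all add: is_walk_Cons_Cons)
  then show ?case by simp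
qed (auto simp: is_walk_def)

lemma graph_dist_less_walk_length:
  assumes "is_walk V E xs"
  shows "graph_dist V E (hd xs) (last xs) < length xs"
proof -
  obtain n where n: "length xs = Suc n"
    using assms by (cases xs) (auto simp: is_walk_def)
  then have "graph_dist V E (hd xs) (last xs) \<le> n"
    unfolding graph_dist_def using assms by (intro Least_le) blast
  then show ?thesis
    using n by simp
qed

lemma graph_dist_self: "u \<in> V \<Longrightarrow> graph_dist V E u u = 0"
  using graph_dist_less_walk_length[of V E "[u]"] by simp

lemma shortest_walk_exists:
  assumes "is_walk V E xs" "hd xs = u" "last xs = v"
  obtains ys where "is_walk V E ys" "hd ys = u" "last ys = v"
    "length ys = Suc (graph_dist V E u v)"
proof -
  have "\<exists>n ys. is_walk V E ys \<and> hd ys = u \<and> last ys = v \<and> length ys = Suc n"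
    using assms by (metis is_walk_def length_greater_0_conv Suc_pred)
  from LeastI_ex[OF this] show ?thesis
    using that unfolding graph_dist_def by blast
qed

lemma graph_dist_sym:
  assumes "\<And>u v. E u v \<Longrightarrow> E v u"
  shows "graph_dist V E u v = graph_dist V E v u"
proof -
  have reverse: "\<exists>xs. is_walk V E xs \<and> hd xs = v \<and> last xs = u \<and> length xs = Suc n"
    if "\<exists>xs. is_walk V E xs \<and> hd xs = u \<and> last xs = v \<and> length xs = Suc n" for u v n
  proof -
    from that obtain xs where "is_walk V E xs" "hd xs = u" "last xs = v" "length xs = Suc n"
      by blast
    then show ?thesis
      using is_walk_rev[OF assms] by (intro exI[of _ "rev xs"]) (auto simp: hd_rev last_rev)
  qed
  have "(\<exists>xs. is_walk V E xs \<and> hd xs = u \<and> last xs = v \<and> length xs = Suc n) \<longleftrightarrow>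
      (\<exists>xs. is_walk V E xs \<and> hd xs = v \<and> last xs = u \<and> length xs = Suc n)" for n
    using reverse[of u v n] reverse[of v u n] by blast
  then show ?thesis
    unfolding graph_dist_def by simp
qed

lemma connected_graph_shortest_walk:
  assumes "connected_graph V E" "u \<in> V" "v \<in> V"
  obtains xs where "is_walk V E xs" "hd xs = u" "last xs = v"
    "length xs = Suc (graph_dist V E u v)"
proof -
  obtain xs where "is_walk V E xs" "hd xs = u" "last xs = v"
    using assms unfolding connected_graph_def by blast
  then show ?thesis
    using that by (rule shortest_walk_exists)
qed

lemma graph_dist_triangle:
  assumes "connected_graph V E" "u \<in> V" "v \<in> V" "w \<in> V"
  shows "graph_dist V E u w \<le> graph_dist V E u v + graph_dist V E v w"
proof -
  obtain xs where xs: "is_walk V E xs" "hd xs = u" "last xs = v"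
      "length xs = Suc (graph_dist V E u v)"
    using connected_graph_shortest_walk[OF assms(1-3)] .
  obtain ys where ys: "is_walk V E ys" "hd ys = v" "last ys = w"
      "length ys = Suc (graph_dist V E v w)"
    using connected_graph_shortest_walk[OF assms(1,3,4)] .
  have "xs \<noteq> []" "ys \<noteq> []"
    using xs ys by auto
  then have "hd (xs @ tl ys) = u" "last (xs @ tl ys) = w"
    using xs ys by (auto simp: neq_Nil_conv)
  moreover have "is_walk V E (xs @ tl ys)"
    using xs ys by (intro is_walk_append) auto
  ultimately show ?thesis
    using graph_dist_less_walk_length[of V E "xs @ tl ys"] xs ys by simp
qed

lemma Lipschitz_le_graph_dist:
  fixes \<phi> :: "'a \<Rightarrow> int"
  assumes lip: "\<And>u v. E u v \<Longrightarrow> \<bar>\<phi> u - \<phi> v\<bar> \<le> 1"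
    and "is_walk V E xs" "hd xs = u" "last xs = v"
  shows "\<bar>\<phi> u - \<phi> v\<bar> \<le> int (graph_dist V E u v)"
proof -
  have along_walk: "\<bar>\<phi> (hd ys) - \<phi> (last ys)\<bar> < int (length ys)" if "is_walk V E ys" for ys
    using that
  proof (induction ys rule: induct_list012)
    case (3 x y zs)
    then have "\<bar>\<phi> x - \<phi> y\<bar> \<le> 1" "\<bar>\<phi> y - \<phi> (last (y # zs))\<bar> < int (length (y # zs))"
      using lip by (simp_all add: is_walk_Cons_Cons)
    then show ?case
      by simp
  qed (auto simp: is_walk_def)
  obtain ys where "is_walk V E ys" "hd ys = u" "last ys = v"
    "length ys = Suc (graph_dist V E u v)"
    using assms(2-) by (rule shortest_walk_exists)
  then show ?thesis
    using along_walk by fastforce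
qed

lemma connected_graphI_root:
  assumes sym: "\<And>u v. E u v \<Longrightarrow> E v u"
    and root: "\<And>v. v \<in> V \<Longrightarrow> \<exists>xs. is_walk V E xs \<and> hd xs = r \<and> last xs = v"
  shows "connected_graph V E"
  unfolding connected_graph_def
proof (intro ballI)
  fix u v assume "u \<in> V" "v \<in> V"
  obtain xs where xs: "is_walk V E xs" "hd xs = r" "last xs = u"
    using root[OF \<open>u \<in> V\<close>] by blast
  obtain ys where ys: "is_walk V E ys" "hd ys = r" "last ys = v"
    using root[OF \<open>v \<in> V\<close>] by blast
  have "xs \<noteq> []" "ys \<noteq> []"
    using xs ys by (simp_all add: is_walk_def)
  then have "hd (rev xs @ tl ys) = u" "last (rev xs @ tl ys) = v"
    using xs ys by (auto simp: hd_rev last_rev neq_Nil_conv)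
  moreover have "is_walk V E (rev xs @ tl ys)"
    using is_walk_rev[OF sym xs(1)] ys \<open>xs \<noteq> []\<close> xs(2)
    by (intro is_walk_append) (simp_all add: last_rev)
  ultimately show "\<exists>zs. is_walk V E zs \<and> hd zs = u \<and> last zs = v"
    by blast
qed

lemma is_cycle_step:
  assumes "is_cycle V E xs" "p < length xs"
  shows "E (xs ! p) (xs ! (Suc p mod length xs))"
proof (cases "Suc p < length xs")
  case True
  then show ?thesis
    using assms(1) by (simp add: is_cycle_def is_walk_def)
next
  case False
  then have "Suc p = length xs"
    using assms(2) by simp
  then have "p = length xs - 1" "Suc p mod length xs = 0"
    by simp_all
  moreover have "xs \<noteq> []"
    using assms(2) by auto
  ultimately show ?thesis
    using assms(1) by (simp add: is_cycle_def last_conv_nth hd_conv_nth)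
qed

lemma no_cycle_if_unique_lower_neighbour:
  fixes h :: "'a \<Rightarrow> nat"
  assumes sym: "\<And>u v. E u v \<Longrightarrow> E v u"
    and unique: "\<And>v u w. E v u \<Longrightarrow> E v w \<Longrightarrow> h u \<le> h v \<Longrightarrow> h w \<le> h v \<Longrightarrow> u = w"
  shows "\<not> is_cycle V E xs"
proof
  assume cycle: "is_cycle V E xs"
  define n where "n = length xs"
  have "n \<ge> 3" "distinct xs"
    using cycle by (simp_all add: is_cycle_def n_def)
  then have "Max (h ` set xs) \<in> h ` set xs"
    by (intro Max_in) (auto simp: n_def)
  then obtain p where p: "p < n" "h (xs ! p) = Max (h ` set xs)"
    by (auto simp: in_set_conv_nth n_def)
  have top: "h (xs ! q) \<le> h (xs ! p)" if "q < n" for q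
    using that p(2) by (simp add: n_def)
  define pred where "pred = (if p = 0 then n - 1 else p - 1)"
  have "Suc p mod n < n" "pred < n" "Suc p mod n \<noteq> pred" "Suc pred mod n = p"
    using p(1) \<open>n \<ge> 3\<close> unfolding pred_def by (auto simp: mod_if)
  moreover from this have "E (xs ! p) (xs ! (Suc p mod n))" "E (xs ! p) (xs ! pred)"
    using is_cycle_step[OF cycle] p(1) sym unfolding n_def by metis+
  ultimately have "xs ! (Suc p mod n) = xs ! pred"
    using unique top by blast
  then show False
    using \<open>distinct xs\<close> \<open>Suc p mod n < n\<close> \<open>pred < n\<close> \<open>Suc p mod n \<noteq> pred\<close>
    by (simp add: nth_eq_iff_index_eq n_def)
qed

section \<open>Box representations\<close>

lemma box_set_Int_nonempty_iff:
  assumes "\<forall>q<t. a1 q \<le> b1 q" "\<forall>q<t. a2 q \<le> b2 q"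
  shows "box_set t a1 b1 \<inter> box_set t a2 b2 \<noteq> {} \<longleftrightarrow> (\<forall>q<t. a1 q \<le> b2 q \<and> a2 q \<le> b1 q)"
proof
  assume "box_set t a1 b1 \<inter> box_set t a2 b2 \<noteq> {}"
  then obtain f where "f \<in> box_set t a1 b1" "f \<in> box_set t a2 b2"
    by blast
  then have "\<forall>q<t. f q \<in> {a1 q..b1 q} \<and> f q \<in> {a2 q..b2 q}"
    unfolding box_set_def by (auto simp: PiE_iff)
  then show "\<forall>q<t. a1 q \<le> b2 q \<and> a2 q \<le> b1 q"
    by fastforce
next
  assume "\<forall>q<t. a1 q \<le> b2 q \<and> a2 q \<le> b1 q"
  then have "restrict (\<lambda>q. max (a1 q) (a2 q)) {..<t} \<in> box_set t a1 b1 \<inter> box_set t a2 b2"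
    using assms unfolding box_set_def by (auto simp: PiE_iff)
  then show "box_set t a1 b1 \<inter> box_set t a2 b2 \<noteq> {}"
    by blast
qed

definition boxes_overlap :: "nat \<Rightarrow> ('v \<Rightarrow> nat \<Rightarrow> real) \<Rightarrow> ('v \<Rightarrow> nat \<Rightarrow> real) \<Rightarrow> 'v \<Rightarrow> 'v \<Rightarrow> bool"
  where "boxes_overlap t a b u v \<longleftrightarrow> (\<forall>q<t. a u q \<le> b v q \<and> a v q \<le> b u q)"

lemma box_representable_iff_overlap:
  "box_representable V G t \<longleftrightarrow> (\<exists>a b. (\<forall>v\<in>V. boxes_overlap t a b v v) \<and>
     (\<forall>u\<in>V. \<forall>v\<in>V. u \<noteq> v \<longrightarrow> (G u v \<longleftrightarrow> boxes_overlap t a b u v)))"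
  unfolding box_representable_def boxes_overlap_def
  by (intro ex_cong1 ex_cong) (auto cong: conj_cong simp: box_set_Int_nonempty_iff)

lemma ex_box_representable:
  fixes V :: "nat set"
  assumes "finite V" and sym: "\<And>u v. G u v \<Longrightarrow> G v u"
  shows "\<exists>t. box_representable V G t"
proof -
  obtain N where N: "\<forall>v\<in>V. v < N"
    using assms(1) finite_nat_set_iff_bounded by blast
  \<comment> \<open>coordinate w separates w from each of its non-neighbours\<close>
  define a :: "nat \<Rightarrow> nat \<Rightarrow> real" where "a w q = (if q = w then 1 else 0)" for w q
  define b :: "nat \<Rightarrow> nat \<Rightarrow> real" where "b w q = (if q = w \<or> G w q then 1 else 0)" for w q
  have "boxes_overlap N a b v v" for v
    unfolding boxes_overlap_def a_def b_def by auto
  moreover have "G u v \<longleftrightarrow> boxes_overlap N a b u v" if "u \<in> V" "v \<in> V" "u \<noteq> v" for u v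
  proof
    assume "G u v"
    then show "boxes_overlap N a b u v"
      using sym unfolding boxes_overlap_def a_def b_def by auto
  next
    assume "boxes_overlap N a b u v"
    then have "a v v \<le> b u v"
      using that N unfolding boxes_overlap_def by auto
    then show "G u v"
      using \<open>u \<noteq> v\<close> by (simp add: a_def b_def split: if_splits)
  qed
  ultimately show ?thesis
    unfolding box_representable_iff_overlap by blast
qed

lemma box_representable_boxicity:
  fixes V :: "nat set"
  assumes "finite V" "\<And>u v. G u v \<Longrightarrow> G v u"
  shows "box_representable V G (boxicity V G)"
  unfolding boxicity_def using ex_box_representable[OF assms] by (rule LeastI_ex)

section \<open>Separation levels\<close>

lemma sum_le_card_by_fibres:
  assumes "finite A" "finite Y" "\<And>y. y \<in> Y \<Longrightarrow> n y \<le> card {x \<in> A. f x = y}"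
  shows "sum n Y \<le> card A"
proof -
  have "sum n Y \<le> (\<Sum>y\<in>Y. card {x \<in> A. f x = y})"
    using assms(3) by (rule sum_mono)
  also have "\<dots> = card (\<Union>y\<in>Y. {x \<in> A. f x = y})"
    using assms(1,2) by (intro card_UN_disjoint[symmetric]) auto
  also have "\<dots> \<le> card A"
    using assms(1) by (intro card_mono) auto
  finally show ?thesis .
qed

text \<open>
  The intersection pattern of the boxes of \<open>x i e\<close> (depth \<open>k + 1 - e\<close> on leg \<open>i\<close>) and
  \<open>c i e\<close> (depth \<open>e\<close> on leg \<open>i\<close>) in a box representation of the \<open>k\<close>-th power of
  the spider; the \<open>q\<close>-th interval of the box of \<open>v\<close> is \<open>[a v q, b v q]\<close>.
\<close>

locale spider_box_pattern =
  fixes t :: nat and a b :: "'v \<Rightarrow> nat \<Rightarrow> real" and x c :: "nat \<Rightarrow> nat \<Rightarrow> 'v" and m k :: nat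
  assumes overlap_same_leg: "\<lbrakk>i < m; 1 \<le> e'; e' \<le> k; e \<le> k\<rbrakk> \<Longrightarrow> boxes_overlap t a b (c i e') (x i e)"
    and overlap_below: "\<lbrakk>i < m; j < m; e < e'; e' \<le> k\<rbrakk> \<Longrightarrow> boxes_overlap t a b (c j e) (x i e')"
    and disjoint_across: "\<lbrakk>i < m; j < m; i \<noteq> j; e \<le> k\<rbrakk> \<Longrightarrow> \<not> boxes_overlap t a b (x i e) (c j e)"
begin

definition separated_at :: "nat \<Rightarrow> bool \<Rightarrow> 'v \<Rightarrow> 'v \<Rightarrow> bool"
  where "separated_at q s u v \<longleftrightarrow> (if s then b u q < a v q else b v q < a u q)"

lemma separated_if_not_overlap:
  assumes "\<not> boxes_overlap t a b u v"
  obtains q s where "q < t" "separated_at q s u v"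
  using assms unfolding boxes_overlap_def separated_at_def by (metis (full_types) not_le)

lemma separated_at_chain_impossible:
  assumes "separated_at q s u v" "separated_at q s u' v'"
    and "boxes_overlap t a b v u'" "boxes_overlap t a b v' u" "q < t"
  shows False
proof -
  have "a v q \<le> b u' q" "a u' q \<le> b v q" "a v' q \<le> b u q" "a u q \<le> b v' q"
    using assms(3-) unfolding boxes_overlap_def by auto
  then show False
    using assms(1,2) unfolding separated_at_def by (cases s) auto
qed

definition threshold :: "nat \<Rightarrow> nat \<Rightarrow> bool \<Rightarrow> nat"
  where "threshold i q s =
    (LEAST e. e = Suc k \<or> e \<le> k \<and> (\<exists>j<m. j \<noteq> i \<and> separated_at q s (x i e) (c j e)))"

lemma threshold_le_Suc: "threshold i q s \<le> Suc k"
  unfolding threshold_def by (rule Least_le) simp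

lemma threshold_le:
  assumes "j < m" "j \<noteq> i" "e \<le> k" "separated_at q s (x i e) (c j e)"
  shows "threshold i q s \<le> e"
  unfolding threshold_def by (rule Least_le) (use assms in blast)

lemma le_threshold:
  assumes "i < m" "i' < m" "1 \<le> e" "e \<le> k" "q < t" "separated_at q s (x i' e) (c i e)"
  shows "e \<le> threshold i q s"
proof (rule ccontr)
  assume "\<not> e \<le> threshold i q s"
  then have below: "threshold i q s < e" by simp
  have "threshold i q s = Suc k \<or> threshold i q s \<le> k \<and>
      (\<exists>j<m. j \<noteq> i \<and> separated_at q s (x i (threshold i q s)) (c j (threshold i q s)))"
    unfolding threshold_def by (rule LeastI[of _ "Suc k"]) simp
  then obtain j where j: "j < m" "threshold i q s \<le> k"
    "separated_at q s (x i (threshold i q s)) (c j (threshold i q s))"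
    using below assms(4) by auto
  show False
    using separated_at_chain_impossible[OF j(3) assms(6)
        overlap_below[OF assms(2) j(1) below assms(4)]
        overlap_same_leg[OF assms(1,3,4) j(2)] assms(5)] .
qed

lemma equal_thresholds_exist:
  assumes "(k + 2) ^ (2 * t) < m"
  obtains i j where "i < m" "j < m" "i \<noteq> j" "\<And>q s. q < t \<Longrightarrow> threshold i q s = threshold j q s"
proof -
  define S where "S = {..<t} \<times> (UNIV :: bool set)"
  define signature where "signature i = restrict (\<lambda>(q, s). threshold i q s) S" for i
  have "signature ` {..<m} \<subseteq> S \<rightarrow>\<^sub>E {..Suc k}"
    using threshold_le_Suc by (auto simp: signature_def)
  then have "card (signature ` {..<m}) \<le> card (S \<rightarrow>\<^sub>E {..Suc k})"
    unfolding S_def by (intro card_mono finite_PiE) auto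
  also have "\<dots> = (k + 2) ^ (2 * t)"
    unfolding S_def by (simp add: card_PiE card_cartesian_product mult.commute)
  also have "\<dots> < card {..<m}"
    using assms by simp
  finally have "\<not> inj_on signature {..<m}"
    using pigeonhole by blast
  then obtain i j where ij: "i < m" "j < m" "i \<noteq> j" "signature i = signature j"
    unfolding inj_on_def by auto
  have "threshold i q s = threshold j q s" if "q < t" for q s
    using fun_cong[OF ij(4), of "(q, s)"] that by (simp add: signature_def S_def)
  with ij show ?thesis
    using that by blast
qed

lemma threshold_attains_zero:
  assumes "i < m" "j < m" "i \<noteq> j"
  obtains q s where "q < t" "threshold i q s = 0"
proof -
  obtain q s where "q < t" "separated_at q s (x i 0) (c j 0)"
    using disjoint_across[OF assms le0] by (rule separated_if_not_overlap)
  moreover from this(2) have "threshold i q s = 0"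
    using threshold_le[of j i 0 q s] assms by simp
  ultimately show ?thesis
    using that by blast
qed

lemma threshold_attains_level_twice:
  assumes ij: "i < m" "j < m" "i \<noteq> j" and eq: "\<And>q s. q < t \<Longrightarrow> threshold i q s = threshold j q s"
    and e: "1 \<le> e" "e \<le> k"
  obtains q s q' s' where "q < t" "q' < t" "(q, s) \<noteq> (q', s')"
    "threshold i q s = e" "threshold i q' s' = e"
proof -
  obtain q s where qs: "q < t" "separated_at q s (x i e) (c j e)"
    using disjoint_across[OF ij e(2)] by (rule separated_if_not_overlap)
  obtain q' s' where qs': "q' < t" "separated_at q' s' (x j e) (c i e)"
    using disjoint_across[OF ij(2,1) ij(3)[symmetric] e(2)] by (rule separated_if_not_overlap)
  have "threshold i q s \<le> e" "e \<le> threshold j q s"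
    using qs ij e by (auto intro: threshold_le le_threshold)
  moreover have "threshold j q' s' \<le> e" "e \<le> threshold i q' s'"
    using qs' ij e by (auto intro: threshold_le le_threshold)
  moreover have "(q, s) \<noteq> (q', s')"
  proof
    assume "(q, s) = (q', s')"
    then show False
      using separated_at_chain_impossible[OF qs(2) _ overlap_same_leg overlap_same_leg] qs' ij e
      by auto
  qed
  ultimately show ?thesis
    using that qs(1) qs'(1) eq[OF qs(1)] eq[OF qs'(1)] by simp
qed

theorem k_less_dimension:
  assumes "(k + 2) ^ (2 * t) < m"
  shows "k < t"
proof -
  obtain i j where ij: "i < m" "j < m" "i \<noteq> j"
    and eq: "\<And>q s. q < t \<Longrightarrow> threshold i q s = threshold j q s"
    using equal_thresholds_exist[OF assms] by blast
  define S where "S = {..<t} \<times> (UNIV :: bool set)"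
  define fibre where "fibre e = {p \<in> S. case_prod (threshold i) p = e}" for e
  have fin: "finite S" "finite (fibre e)" for e
    by (simp_all add: S_def fibre_def)
  have zero: "1 \<le> card (fibre 0)"
  proof -
    obtain q s where "q < t" "threshold i q s = 0"
      using threshold_attains_zero[OF ij] .
    then have "fibre 0 \<noteq> {}"
      by (auto simp: fibre_def S_def)
    then show ?thesis
      using fin(2) by (simp add: Suc_le_eq card_gt_0_iff)
  qed
  have twice: "2 \<le> card (fibre e)" if e: "1 \<le> e" "e \<le> k" for e
  proof -
    obtain q s q' s' where "q < t" "q' < t" "(q, s) \<noteq> (q', s')"
        "threshold i q s = e" "threshold i q' s' = e"
      using threshold_attains_level_twice[OF ij eq e] .
    then have "{(q, s), (q', s')} \<subseteq> fibre e"
      by (auto simp: fibre_def S_def)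
    then have "card {(q, s), (q', s')} \<le> card (fibre e)"
      by (rule card_mono[OF fin(2)])
    then show ?thesis
      using \<open>(q, s) \<noteq> (q', s')\<close> by simp
  qed
  define n :: "nat \<Rightarrow> nat" where "n e = (if e = 0 then 1 else 2)" for e
  have sum_n: "sum n {..l} = 2 * l + 1" for l
    by (induction l) (simp_all add: n_def)
  have "sum n {..k} \<le> card S"
  proof (rule sum_le_card_by_fibres[OF fin(1) finite_atMost])
    fix e assume "e \<in> {..k}"
    then have "n e \<le> card (fibre e)"
      using zero twice[of e] by (cases "e = 0") (simp_all add: n_def)
    then show "n e \<le> card {p \<in> S. case_prod (threshold i) p = e}"
      by (simp only: fibre_def)
  qed
  moreover have "card S = 2 * t"
    by (simp add: S_def card_cartesian_product)
  ultimately show ?thesis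
    using sum_n[of k] by linarith
qed

end

section \<open>The spider\<close>

text \<open>
  The spider with \<open>m\<close> legs of \<open>K\<close> vertices each, on natural numbers: vertex \<open>d\<close>
  (counted from the centre) of leg \<open>i\<close> is coded by \<open>prod_encode (i, d)\<close>, and all
  \<open>spider_vertex i 0\<close> are the centre \<open>0 = prod_encode (0, 0)\<close>.
\<close>

definition spider_vertex :: "nat \<Rightarrow> nat \<Rightarrow> nat"
  where "spider_vertex i d = (if d = 0 then 0 else prod_encode (i, d))"

definition spider_leg :: "nat \<Rightarrow> nat"
  where "spider_leg w = fst (prod_decode w)"

definition spider_depth :: "nat \<Rightarrow> nat"
  where "spider_depth w = snd (prod_decode w)"

definition spider_verts :: "nat \<Rightarrow> nat \<Rightarrow> nat set"
  where "spider_verts m K = case_prod spider_vertex ` ({..<m} \<times> {..K})"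

definition spider_edge :: "nat \<Rightarrow> nat \<Rightarrow> nat \<Rightarrow> nat \<Rightarrow> bool"
  where "spider_edge m K u w \<longleftrightarrow> u \<in> spider_verts m K \<and> w \<in> spider_verts m K \<and>
    (spider_depth u = Suc (spider_depth w) \<or> spider_depth w = Suc (spider_depth u)) \<and>
    (spider_leg u = spider_leg w \<or> u = 0 \<or> w = 0)"

lemma prod_decode_0: "prod_decode 0 = (0, 0)"
  by (simp add: prod_decode_def prod_decode_aux.simps)

lemma spider_depth_0 [simp]: "spider_depth 0 = 0"
  by (simp add: spider_depth_def prod_decode_0)

lemma spider_vertex_depth_0 [simp]: "spider_vertex i 0 = 0"
  by (simp add: spider_vertex_def)

lemma spider_depth_vertex [simp]: "spider_depth (spider_vertex i d) = d"
  by (simp add: spider_vertex_def spider_depth_def prod_decode_0)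

lemma spider_leg_vertex [simp]: "d \<noteq> 0 \<Longrightarrow> spider_leg (spider_vertex i d) = i"
  by (simp add: spider_vertex_def spider_leg_def)

lemma spider_vertex_in_verts [intro, simp]:
  "i < m \<Longrightarrow> d \<le> K \<Longrightarrow> spider_vertex i d \<in> spider_verts m K"
  unfolding spider_verts_def by force

lemma spider_vertsE:
  assumes "w \<in> spider_verts m K"
  obtains i d where "i < m" "d \<le> K" "w = spider_vertex i d"
  using assms unfolding spider_verts_def by auto

lemma spider_vertex_leg_depth:
  assumes "w \<in> spider_verts m K"
  shows "spider_vertex (spider_leg w) (spider_depth w) = w"
proof -
  obtain i d where "w = spider_vertex i d"
    using assms by (rule spider_vertsE)
  then show ?thesis
    by (cases "d = 0") simp_all
qed

lemma spider_edge_sym: "spider_edge m K u w \<Longrightarrow> spider_edge m K w u"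
  unfolding spider_edge_def by auto

lemma spider_lower_neighbour_unique:
  assumes "spider_edge m K w u" "spider_edge m K w u'"
    and "spider_depth u \<le> spider_depth w" "spider_depth u' \<le> spider_depth w"
  shows "u = u'"
proof -
  have u: "u \<in> spider_verts m K" "spider_depth w = Suc (spider_depth u)"
      "spider_depth u \<noteq> 0 \<Longrightarrow> spider_leg u = spider_leg w"
    and u': "u' \<in> spider_verts m K" "spider_depth w = Suc (spider_depth u')"
      "spider_depth u' \<noteq> 0 \<Longrightarrow> spider_leg u' = spider_leg w"
    using assms unfolding spider_edge_def by auto
  then show ?thesis
    using spider_vertex_leg_depth[OF u(1)] spider_vertex_leg_depth[OF u'(1)]
    by (metis Suc_inject spider_vertex_depth_0)
qed

lemma spider_centre_in_verts [intro, simp]: "0 < m \<Longrightarrow> 0 \<in> spider_verts m K"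
  using spider_vertex_in_verts[of 0 m 0 K] by simp

lemma spider_leg_walk:
  assumes "i < m" "d \<le> e" "e \<le> K"
  obtains xs where "is_walk (spider_verts m K) (spider_edge m K) xs"
    "hd xs = spider_vertex i d" "last xs = spider_vertex i e" "length xs = Suc (e - d)"
proof
  show "hd (map (spider_vertex i) [d..<Suc e]) = spider_vertex i d"
    "last (map (spider_vertex i) [d..<Suc e]) = spider_vertex i e"
    "length (map (spider_vertex i) [d..<Suc e]) = Suc (e - d)"
    using assms(2) by (simp_all add: hd_map last_map del: upt_Suc)
  show "is_walk (spider_verts m K) (spider_edge m K) (map (spider_vertex i) [d..<Suc e])"
    unfolding is_walk_def
  proof (intro conjI allI impI)
    fix n assume "Suc n < length (map (spider_vertex i) [d..<Suc e])"
    then have "d + Suc n \<le> e"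
      by (simp del: upt_Suc)
    then show "spider_edge m K (map (spider_vertex i) [d..<Suc e] ! n)
        (map (spider_vertex i) [d..<Suc e] ! Suc n)"
      using assms by (cases "d + n = 0") (simp_all del: upt_Suc add: spider_edge_def)
  qed (use assms in \<open>auto simp del: upt_Suc\<close>)
qed

lemma spider_connected:
  "connected_graph (spider_verts m K) (spider_edge m K)"
proof (rule connected_graphI_root[OF spider_edge_sym])
  fix w assume "w \<in> spider_verts m K"
  then obtain i d where "i < m" "d \<le> K" "w = spider_vertex i d"
    by (rule spider_vertsE)
  then show "\<exists>xs. is_walk (spider_verts m K) (spider_edge m K) xs \<and> hd xs = 0 \<and> last xs = w"
    using spider_leg_walk[of i m 0 d K] by (metis le0 spider_vertex_depth_0)
qed

lemma spider_is_finite_tree: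
  assumes "0 < m"
  shows "finite_tree (spider_verts m K) (spider_edge m K)"
  unfolding finite_tree_def
proof (intro conjI)
  show "simple_graph (spider_verts m K) (spider_edge m K)"
    unfolding simple_graph_def spider_edge_def by auto
  show "finite (spider_verts m K)"
    unfolding spider_verts_def by simp
  show "spider_verts m K \<noteq> {}"
    using assms by blast
  show "\<nexists>xs. is_cycle (spider_verts m K) (spider_edge m K) xs"
    using no_cycle_if_unique_lower_neighbour[of "spider_edge m K" spider_depth]
      spider_edge_sym spider_lower_neighbour_unique by blast
qed (rule spider_connected)

abbreviation spider_dist :: "nat \<Rightarrow> nat \<Rightarrow> nat \<Rightarrow> nat \<Rightarrow> nat"
  where "spider_dist m K \<equiv> graph_dist (spider_verts m K) (spider_edge m K)"

lemma spider_dist_sym: "spider_dist m K u v = spider_dist m K v u"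
  by (rule graph_dist_sym) (rule spider_edge_sym)

lemma spider_dist_same_leg:
  assumes "i < m" "d \<le> K" "e \<le> K"
  shows "spider_dist m K (spider_vertex i d) (spider_vertex i e) \<le> (e - d) + (d - e)"
proof -
  have upward: "spider_dist m K (spider_vertex i d) (spider_vertex i e) \<le> e - d"
    if de: "d \<le> e" "e \<le> K" for d e
  proof -
    obtain xs where "is_walk (spider_verts m K) (spider_edge m K) xs"
      "hd xs = spider_vertex i d" "last xs = spider_vertex i e" "length xs = Suc (e - d)"
      using spider_leg_walk[OF assms(1) de] .
    then show ?thesis
      using graph_dist_less_walk_length by fastforce
  qed
  show ?thesis
  proof (cases "d \<le> e")
    case True
    then show ?thesis
      using upward assms by simp
  next
    case False
    then show ?thesis
      using upward[of e d] assms spider_dist_sym by simp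
  qed
qed

lemma spider_dist_through_centre:
  assumes "i < m" "j < m" "d \<le> K" "e \<le> K"
  shows "spider_dist m K (spider_vertex i d) (spider_vertex j e) \<le> d + e"
proof -
  have "spider_dist m K (spider_vertex i d) (spider_vertex j e)
      \<le> spider_dist m K (spider_vertex i d) 0 + spider_dist m K 0 (spider_vertex j e)"
    using assms by (intro graph_dist_triangle spider_connected) auto
  also have "\<dots> \<le> d + e"
    using spider_dist_same_leg[where m=m and K=K and i=i and d=d and e=0]
      spider_dist_same_leg[where m=m and K=K and i=j and d=0 and e=e] assms
    by (simp add: add_mono)
  finally show ?thesis .
qed

lemma spider_dist_across:
  assumes "i < m" "j < m" "i \<noteq> j" "d \<le> K" "e \<le> K"
  shows "d + e \<le> spider_dist m K (spider_vertex i d) (spider_vertex j e)"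
proof -
  define \<phi> where
    "\<phi> w = (if spider_leg w = i then int (spider_depth w) else - int (spider_depth w))" for w
  have "\<bar>\<phi> u - \<phi> w\<bar> \<le> 1" if "spider_edge m K u w" for u w
    using that unfolding spider_edge_def \<phi>_def by auto
  moreover obtain xs where "is_walk (spider_verts m K) (spider_edge m K) xs"
      "hd xs = spider_vertex i d" "last xs = spider_vertex j e"
    using connected_graph_shortest_walk[OF spider_connected] assms by (metis spider_vertex_in_verts)
  ultimately have "\<bar>\<phi> (spider_vertex i d) - \<phi> (spider_vertex j e)\<bar>
      \<le> int (spider_dist m K (spider_vertex i d) (spider_vertex j e))"
    by (rule Lipschitz_le_graph_dist)
  moreover have "\<phi> (spider_vertex i d) = int d"
    by (cases "d = 0") (simp_all add: \<phi>_def)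
  moreover have "\<phi> (spider_vertex j e) = - int e"
    using assms(3) by (cases "e = 0") (simp_all add: \<phi>_def)
  ultimately show ?thesis
    by simp
qed

lemma spider_power_box_dimension_gt:
  fixes k m t :: nat
  defines "V \<equiv> spider_verts m (Suc k)"
  assumes "box_representable V (graph_power V (spider_edge m (Suc k)) k) t" "(k + 2) ^ (2 * t) < m"
  shows "k < t"
proof -
  obtain a b where refl: "\<forall>v\<in>V. boxes_overlap t a b v v"
    and iff: "\<forall>u\<in>V. \<forall>v\<in>V. u \<noteq> v \<longrightarrow>
        (graph_power V (spider_edge m (Suc k)) k u v \<longleftrightarrow> boxes_overlap t a b u v)"
    using assms(2) unfolding box_representable_iff_overlap by blast
  have near: "boxes_overlap t a b u v" if "u \<in> V" "v \<in> V" "spider_dist m (Suc k) u v \<le> k" for u v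
    using that refl iff unfolding graph_power_def V_def by (cases "u = v") auto
  have far: "\<not> boxes_overlap t a b u v" if "u \<in> V" "v \<in> V" "k < spider_dist m (Suc k) u v" for u v
  proof -
    have "u \<noteq> v"
      using that(3) graph_dist_self[of u V] that(1) unfolding V_def by auto
    moreover have "\<not> graph_power V (spider_edge m (Suc k)) k u v"
      using that(3) unfolding graph_power_def V_def by simp
    ultimately show ?thesis
      using that(1,2) iff by blast
  qed
  interpret spider_box_pattern t a b "\<lambda>i e. spider_vertex i (Suc k - e)" spider_vertex m k
  proof
    fix i e e' assume "i < m" "1 \<le> e'" "e' \<le> k" "e \<le> k"
    then show "boxes_overlap t a b (spider_vertex i e') (spider_vertex i (Suc k - e))"
      using spider_dist_same_leg[of i m e' "Suc k" "Suc k - e"] by (intro near) (auto simp: V_def)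
  next
    fix i j e e' assume "i < m" "j < m" "e < e'" "e' \<le> k"
    then show "boxes_overlap t a b (spider_vertex j e) (spider_vertex i (Suc k - e'))"
      using spider_dist_through_centre[of j m i e "Suc k" "Suc k - e'"] by (intro near) (auto simp: V_def)
  next
    fix i j e assume "i < m" "j < m" "i \<noteq> j" "e \<le> k"
    then show "\<not> boxes_overlap t a b (spider_vertex i (Suc k - e)) (spider_vertex j e)"
      using spider_dist_across[of i m j "Suc k - e" "Suc k" e] by (intro far) (auto simp: V_def)
  qed
  show ?thesis
    using k_less_dimension assms(3) .
qed

theorem theorem2:
  fixes k :: nat
  assumes "k \<ge> 1"
  shows "\<exists>(V :: nat set) E. finite_tree V E \<and> boxicity V (graph_power V E k) > k"
proof -
  define m where "m = (k + 2) ^ (2 * k) + 1"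
  define V where "V = spider_verts m (Suc k)"
  define G where "G = graph_power V (spider_edge m (Suc k)) k"
  have tree: "finite_tree V (spider_edge m (Suc k))"
    unfolding V_def m_def by (rule spider_is_finite_tree) simp
  have "box_representable V G (boxicity V G)"
  proof (rule box_representable_boxicity)
    show "finite V"
      using tree by (simp add: finite_tree_def)
    show "G v u" if "G u v" for u v
      using that spider_dist_sym unfolding G_def graph_power_def V_def by auto
  qed
  moreover have "(k + 2) ^ (2 * boxicity V G) < m" if "boxicity V G \<le> k"
  proof -
    have "(k + 2) ^ (2 * boxicity V G) \<le> (k + 2) ^ (2 * k)"
      using that by (simp add: power_increasing)
    then show ?thesis
      unfolding m_def by linarith
  qed
  ultimately have "k < boxicity V G"
    using spider_power_box_dimension_gt unfolding V_def G_def by (meson not_le)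
  then show ?thesis
    using tree unfolding G_def by blast
qed

end
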